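(* For every integer $N\ge 0$, let $T_{2\times 3}(6,N)$ be the number of tilings of a $6\times N$ rectangle by $N$ tiles of size $2\times 3$. Then, as formal power series, \[ \sum_{N\ge 0} T_{2\times 3}(6,N)\,z^N=\frac{1}{1-z^2-z^3}. \]
   Context: A tiling of an $m\times n$ rectangle (width $m$, length $n$, made of $mn$ unit squares) by $a\times b$ tiles is a partition of the rectangle into non-overlapping axis-parallel $a\times b$ rectangles with integer corner coordinates, each placed in either of its two orientations. Tilings related by reflections or rotations of the rectangle are counted as distinct. The empty tiling counts once for $N=0$. *)

theory Defs
  imports Main "HOL-Computational_Algebra.Formal_Power_Series"
begin

text \<open>The m x n rectangle as a set of unit cells (x,y), 0 <= x < m (width), 0 <= y < n (length).\<close>
definition rect :: "nat \<Rightarrow> nat \<Rightarrow> (nat \<times> nat) set" where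
  "rect m n = {0..<m} \<times> {0..<n}"

definition tile_placements :: "nat \<Rightarrow> nat \<Rightarrow> (nat \<times> nat) set set" where
  "tile_placements a b =
     {R. \<exists>x y. R = {x..<x+a} \<times> {y..<y+b} \<or> R = {x..<x+b} \<times> {y..<y+a}}"

definition tilings :: "nat \<Rightarrow> nat \<Rightarrow> nat \<Rightarrow> nat \<Rightarrow> (nat \<times> nat) set set set" where
  "tilings a b m n =
     {T. T \<subseteq> tile_placements a b \<and> \<Union>T = rect m n \<and> pairwise disjnt T}"

definition num_tilings :: "nat \<Rightarrow> nat \<Rightarrow> nat \<Rightarrow> nat \<Rightarrow> nat" where
  "num_tilings a b m n = card (tilings a b m n)"

end

theory Submission
  imports Defs
begin

unbundle fps_syntax

text \<open>Consider the tile covering the corner cell \<open>(0, 0)\<close> of a tiling of the \<open>6 \<times> N\<close> rectangle,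
  \<open>N > 0\<close>. If it lies flat (3 wide, 2 high), disjointness forces a second flat tile next to it;
  if it stands upright, the rest of the bottom \<open>6 \<times> 3\<close> strip is forced to consist of two more
  upright tiles. Removing this bottom layer and translating the remaining tiles down is a
  bijection onto the tilings of the \<open>6 \<times> (N - 2)\<close> resp. \<open>6 \<times> (N - 3)\<close> rectangle, so
  \<open>T(N) = T(N - 2) + T(N - 3)\<close> for \<open>N > 0\<close> (terms with negative index being 0) and \<open>T(0) = 1\<close>;
  this recurrence says \<open>(1 - z\<^sup>2 - z\<^sup>3) \<cdot> \<Sum> T(N) z\<^sup>N = 1\<close>.\<close>

definition tilings_of :: "nat \<Rightarrow> nat \<Rightarrow> (nat \<times> nat) set \<Rightarrow> (nat \<times> nat) set set set" where
  "tilings_of a b X = {T. T \<subseteq> tile_placements a b \<and> \<Union>T = X \<and> pairwise disjnt T}"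

lemma tilings_eq_tilings_of: "tilings a b m n = tilings_of a b (rect m n)"
  by (simp add: tilings_def tilings_of_def)

lemma finite_tilings_of: "finite X \<Longrightarrow> finite (tilings_of a b X)"
  unfolding tilings_of_def by (rule finite_subset[of _ "Pow (Pow X)"]) auto

lemma tile_placementsE:
  assumes "R \<in> tile_placements a b"
  obtains x y w h where "R = {x..<x+w} \<times> {y..<y+h}" "w = a \<and> h = b \<or> w = b \<and> h = a"
  using assms unfolding tile_placements_def by blast

lemma tile_placementsI:
  "w = a \<and> h = b \<or> w = b \<and> h = a \<Longrightarrow> {x..<x+w} \<times> {y..<y+h} \<in> tile_placements a b"
  unfolding tile_placements_def by blast

lemma atLeastLessThan_times_in_tile_placements:
  assumes "x \<le> x'" "y \<le> y'" "x' - x = a \<and> y' - y = b \<or> x' - x = b \<and> y' - y = a"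
  shows "{x..<x'} \<times> {y..<y'} \<in> tile_placements a b"
  using tile_placementsI[of "x' - x" a "y' - y" b x y] assms by simp

lemma tile_placements_nonempty:
  "R \<in> tile_placements a b \<Longrightarrow> 0 < a \<Longrightarrow> 0 < b \<Longrightarrow> R \<noteq> {}"
  by (elim tile_placementsE) auto

lemma tilings_of_empty: "0 < a \<Longrightarrow> 0 < b \<Longrightarrow> tilings_of a b {} = {{}}"
  unfolding tilings_of_def using tile_placements_nonempty by fastforce

definition shift :: "nat \<Rightarrow> nat \<times> nat \<Rightarrow> nat \<times> nat" where
  "shift k = map_prod id (\<lambda>y. y + k)"

lemma inj_shift: "inj (shift k)"
  unfolding shift_def by (intro prod.inj_map inj_on_id) (simp add: inj_def)

lemma range_shift: "range (shift k) = UNIV \<times> {k..}"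
proof -
  have "range (\<lambda>y::nat. y + k) = {k..}"
    by (auto simp: image_iff) (metis le_add_diff_inverse2)
  then show ?thesis
    unfolding shift_def UNIV_Times_UNIV[symmetric] by (intro map_prod_surj_on) simp_all
qed

lemma shift_rectangle: "shift k ` (A \<times> {y..<y+h}) = A \<times> {y+k..<y+k+h}"
  unfolding shift_def by (simp add: map_prod_surj_on add.commute add.left_commute)

lemma shift_tile: "R \<in> tile_placements a b \<Longrightarrow> shift k ` R \<in> tile_placements a b"
  by (elim tile_placementsE) (simp add: shift_rectangle tile_placementsI)

lemma vimage_shift_tile:
  assumes R: "R \<in> tile_placements a b" "R \<subseteq> range (shift k)" and "0 < a" "0 < b"
  shows "shift k -` R \<in> tile_placements a b"
proof -
  obtain x y w h where R_eq: "R = {x..<x+w} \<times> {y..<y+h}" and wh: "w = a \<and> h = b \<or> w = b \<and> h = a"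
    using R(1) by (rule tile_placementsE)
  have "(x, y) \<in> R"
    using R_eq wh \<open>0 < a\<close> \<open>0 < b\<close> by auto
  with R(2) have "k \<le> y"
    by (auto simp: range_shift)
  then have "R = shift k ` ({x..<x+w} \<times> {y-k..<y-k+h})"
    using shift_rectangle[of k "{x..<x+w}" "y - k" h] by (simp add: R_eq)
  then have "shift k -` R = {x..<x+w} \<times> {y-k..<y-k+h}"
    by (simp add: inj_vimage_image_eq inj_shift)
  with wh show ?thesis
    by (simp add: tile_placementsI)
qed

lemma disjnt_shift_iff: "disjnt (shift k ` A) (shift k ` B) \<longleftrightarrow> disjnt A B"
  by (simp add: disjnt_def flip: image_Int[OF inj_shift])

lemma bij_betw_shift_tilings:
  assumes "0 < a" "0 < b"
  shows "bij_betw (image (image (shift k))) (tilings_of a b X) (tilings_of a b (shift k ` X))"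
proof (rule bij_betw_byWitness[where f' = "image (vimage (shift k))"]; (intro ballI)?)
  show "image (vimage (shift k)) (image (shift k) ` T) = T" for T
    by (simp add: image_comp inj_vimage_image_eq[OF inj_shift])
  show "image (shift k) ` (image (vimage (shift k)) T') = T'"
    if "T' \<in> tilings_of a b (shift k ` X)" for T'
  proof -
    have "R \<subseteq> range (shift k)" if "R \<in> T'" for R
      using \<open>T' \<in> _\<close> \<open>R \<in> T'\<close> unfolding tilings_of_def by blast
    then show ?thesis
      by (simp add: image_comp comp_def image_vimage_eq Int_absorb2 cong: image_cong)
  qed
  show "image (image (shift k)) ` tilings_of a b X \<subseteq> tilings_of a b (shift k ` X)"
    by (auto simp: tilings_of_def shift_tile image_Union pairwise_image disjnt_shift_iff
        intro: pairwise_mono)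
  show "image (vimage (shift k)) ` tilings_of a b (shift k ` X) \<subseteq> tilings_of a b X"
  proof
    fix T assume "T \<in> image (vimage (shift k)) ` tilings_of a b (shift k ` X)"
    then obtain T' where T': "T' \<subseteq> tile_placements a b" "\<Union>T' = shift k ` X" "pairwise disjnt T'"
      and T: "T = image (vimage (shift k)) T'"
      unfolding tilings_of_def by blast
    show "T \<in> tilings_of a b X"
      unfolding tilings_of_def
    proof (intro CollectI conjI)
      show "T \<subseteq> tile_placements a b"
        using T' assms unfolding T by (blast intro: vimage_shift_tile)
      show "\<Union>T = X"
        using T'(2) by (simp add: T inj_vimage_image_eq[OF inj_shift] flip: vimage_Union)
      show "pairwise disjnt T"
        unfolding T pairwise_image by (rule pairwise_mono[OF T'(3)]) (auto simp: disjnt_def)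
    qed
  qed
qed

lemma pairwise_disjnt_Un:
  "pairwise disjnt A \<Longrightarrow> pairwise disjnt B \<Longrightarrow> disjnt (\<Union>A) (\<Union>B) \<Longrightarrow> pairwise disjnt (A \<union> B)"
  by (auto simp: pairwise_def intro: disjnt_sym)

lemma tilings_of_Un:
  assumes "B \<in> tilings_of a b X" "S \<in> tilings_of a b Y" "X \<inter> Y = {}"
  shows "B \<union> S \<in> tilings_of a b (X \<union> Y)"
proof -
  have "pairwise disjnt (B \<union> S)"
    using assms by (intro pairwise_disjnt_Un) (auto simp: tilings_of_def disjnt_def)
  with assms show ?thesis
    unfolding tilings_of_def by blast
qed

lemma tilings_of_Diff:
  assumes T: "T \<in> tilings_of a b (X \<union> Y)" and "B \<subseteq> T" "\<Union>B = X" "X \<inter> Y = {}"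
  shows "T - B \<in> tilings_of a b Y"
proof -
  have "\<Union>(T - B) = Y"
  proof (intro equalityI subsetI)
    fix p assume "p \<in> \<Union>(T - B)"
    then obtain R where R: "R \<in> T" "R \<notin> B" "p \<in> R" by blast
    have "p \<notin> X"
    proof
      assume "p \<in> X"
      then obtain R' where "R' \<in> B" "p \<in> R'"
        using \<open>\<Union>B = X\<close> by blast
      moreover have "disjnt R R'"
        using T R \<open>B \<subseteq> T\<close> \<open>R' \<in> B\<close> by (auto simp: tilings_of_def intro: pairwiseD)
      ultimately show False
        using R(3) by (auto simp: disjnt_def)
    qed
    moreover have "p \<in> X \<union> Y"
      using T R by (auto simp: tilings_of_def)
    ultimately show "p \<in> Y" by blast
  next
    fix p assume "p \<in> Y"
    then obtain R where "R \<in> T" "p \<in> R"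
      using T by (auto simp: tilings_of_def)
    moreover have "R \<notin> B"
      using \<open>p \<in> R\<close> \<open>p \<in> Y\<close> assms(3,4) by blast
    ultimately show "p \<in> \<Union>(T - B)" by blast
  qed
  with T show ?thesis
    unfolding tilings_of_def by (auto intro: pairwise_subset)
qed

lemma tilings_of_disjoint_regions:
  assumes "B \<in> tilings_of a b X" "S \<in> tilings_of a b Y" "X \<inter> Y = {}" "0 < a" "0 < b"
  shows "B \<inter> S = {}"
proof -
  have "R = {}" if "R \<in> B" "R \<in> S" for R
    using that assms(1-3) unfolding tilings_of_def by blast
  with assms show ?thesis
    using tile_placements_nonempty unfolding tilings_of_def by blast
qed

lemma bij_betw_extend_tilings:
  assumes B: "B \<in> tilings_of a b X" and XY: "X \<inter> Y = {}" and "0 < a" "0 < b"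
  shows "bij_betw (\<lambda>S. B \<union> S) (tilings_of a b Y) {T \<in> tilings_of a b (X \<union> Y). B \<subseteq> T}"
proof (rule bij_betw_byWitness[where f' = "\<lambda>T. T - B"]; (intro ballI)?)
  show "(B \<union> S) - B = S" if "S \<in> tilings_of a b Y" for S
    using tilings_of_disjoint_regions[OF B that XY \<open>0 < a\<close> \<open>0 < b\<close>] by blast
  show "B \<union> (T - B) = T" if "T \<in> {T \<in> tilings_of a b (X \<union> Y). B \<subseteq> T}" for T
    using that by blast
  show "(\<lambda>S. B \<union> S) ` tilings_of a b Y \<subseteq> {T \<in> tilings_of a b (X \<union> Y). B \<subseteq> T}"
    using tilings_of_Un[OF B _ XY] by blast
  have "\<Union>B = X"
    using B by (simp add: tilings_of_def)
  then show "(\<lambda>T. T - B) ` {T \<in> tilings_of a b (X \<union> Y). B \<subseteq> T} \<subseteq> tilings_of a b Y"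
    using tilings_of_Diff[OF _ _ _ XY] by blast
qed

lemma rect_Un_shift_rect: "rect m k \<union> shift k ` rect m n = rect m (k + n)"
  using shift_rectangle[of k "{0..<m}" 0 n] by (auto simp: rect_def)

lemma rect_Int_shift_rect: "rect m k \<inter> shift k ` rect m n = {}"
  using shift_rectangle[of k "{0..<m}" 0 n] by (auto simp: rect_def)

lemma card_tilings_containing_layer:
  assumes B: "B \<in> tilings a b m k" and "0 < a" "0 < b" "0 < m"
  shows "card {T \<in> tilings a b m N. B \<subseteq> T} = (if k \<le> N then num_tilings a b m (N - k) else 0)"
proof (cases "k \<le> N")
  case True
  then have "rect m N = rect m k \<union> shift k ` rect m (N - k)"
    by (simp add: rect_Un_shift_rect)
  moreover have "bij_betw ((\<union>) B) (tilings_of a b (shift k ` rect m (N - k)))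
      {T \<in> tilings_of a b (rect m k \<union> shift k ` rect m (N - k)). B \<subseteq> T}"
    using B by (intro bij_betw_extend_tilings rect_Int_shift_rect assms) (simp add: tilings_eq_tilings_of)
  ultimately have "card {T \<in> tilings a b m N. B \<subseteq> T} = card (tilings_of a b (shift k ` rect m (N - k)))"
    by (simp add: tilings_eq_tilings_of bij_betw_same_card)
  also have "\<dots> = num_tilings a b m (N - k)"
    using bij_betw_same_card[OF bij_betw_shift_tilings[OF \<open>0 < a\<close> \<open>0 < b\<close>]]
    by (simp add: num_tilings_def tilings_eq_tilings_of)
  finally show ?thesis
    using True by simp
next
  case False
  have "(0, N) \<in> rect m k - rect m N"
    using False \<open>0 < m\<close> by (simp add: rect_def)
  then have no_tiling: "{T \<in> tilings a b m N. B \<subseteq> T} = {}"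
    using B unfolding tilings_def by blast
  show ?thesis
    unfolding no_tiling using False by simp
qed

lemma num_tilings_zero: "0 < a \<Longrightarrow> 0 < b \<Longrightarrow> num_tilings a b m 0 = 1"
  by (simp add: num_tilings_def tilings_eq_tilings_of rect_def tilings_of_empty)

lemma bottom_tile:
  assumes T: "T \<in> tilings a b m N" and "0 < N" "c < m"
  obtains x w h where "{x..<x+w} \<times> {0..<h} \<in> T" "x \<le> c" "c < x + w" "x + w \<le> m"
    "w = a \<and> h = b \<or> w = b \<and> h = a"
proof -
  have "(c, 0) \<in> \<Union>T"
    using T \<open>0 < N\<close> \<open>c < m\<close> by (simp add: tilings_def rect_def)
  then obtain R where R: "R \<in> T" "(c, 0) \<in> R" by blast
  have "R \<in> tile_placements a b"
    using R(1) T by (auto simp: tilings_def)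
  then obtain x y w h where R_eq: "R = {x..<x+w} \<times> {y..<y+h}" and wh: "w = a \<and> h = b \<or> w = b \<and> h = a"
    by (rule tile_placementsE)
  have x: "x \<le> c" "c < x + w" and y: "y = 0"
    using R(2) R_eq by auto
  then have "(x + w - 1, y) \<in> R"
    using R(2) R_eq by auto
  then have "(x + w - 1, y) \<in> rect m N"
    using R(1) T by (auto simp: tilings_def)
  then have "x + w \<le> m"
    using x by (auto simp: rect_def)
  with R(1) R_eq x y wh show thesis
    using that by simp
qed

lemma bottom_tiles_eq_or_apart:
  fixes T :: "(nat \<times> nat) set set"
  assumes T: "pairwise disjnt T" and R: "{x..<x+w} \<times> {0..<h} \<in> T" and R': "{x'..<x'+w'} \<times> {0..<h'} \<in> T"
    and "0 < w" "0 < h" "0 < w'" "0 < h'"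
  shows "(x, w, h) = (x', w', h') \<or> x + w \<le> x' \<or> x' + w' \<le> x"
proof (rule disjCI)
  assume overlap: "\<not> (x + w \<le> x' \<or> x' + w' \<le> x)"
  then have "(max x x', 0) \<in> ({x..<x+w} \<times> {0..<h}) \<inter> ({x'..<x'+w'} \<times> {0..<h'})"
    using assms(4-) by (auto simp: max_def)
  then have "\<not> disjnt ({x..<x+w} \<times> {0..<h}) ({x'..<x'+w'} \<times> {0..<h'})"
    unfolding disjnt_def by blast
  then have "{x..<x+w} \<times> {0..<h} = {x'..<x'+w'} \<times> {0..<h'}"
    using pairwiseD[OF T R R'] by blast
  then show "(x, w, h) = (x', w', h')"
    using assms(4-) by (simp add: times_eq_iff atLeastLessThan_eq_iff)
qed

definition horizontal_layer :: "(nat \<times> nat) set set" where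
  "horizontal_layer = {{0..<3} \<times> {0..<2}, {3..<6} \<times> {0..<2}}"

definition vertical_layer :: "(nat \<times> nat) set set" where
  "vertical_layer = {{0..<2} \<times> {0..<3}, {2..<4} \<times> {0..<3}, {4..<6} \<times> {0..<3}}"

lemma horizontal_layer_tiling: "horizontal_layer \<in> tilings 2 3 6 2"
  by (auto simp: tilings_def horizontal_layer_def rect_def disjnt_def pairwise_insert
      intro!: atLeastLessThan_times_in_tile_placements)

lemma vertical_layer_tiling: "vertical_layer \<in> tilings 2 3 6 3"
  by (auto simp: tilings_def vertical_layer_def rect_def disjnt_def pairwise_insert
      intro!: atLeastLessThan_times_in_tile_placements)

text \<open>Keep tile corners such as \<open>x + 2\<close> in numeral form, so that they match the layers above.\<close>
declare add_2_eq_Suc' [simp del]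

lemma horizontal_layer_subset:
  assumes T: "T \<in> tilings 2 3 6 N" and "0 < N" and corner: "{0..<3} \<times> {0..<2} \<in> T"
  shows "horizontal_layer \<subseteq> T"
proof -
  have disj: "pairwise disjnt T"
    using T by (simp add: tilings_def)
  have R0: "{0..<0+3} \<times> {0..<2} \<in> T"
    using corner by simp
  obtain x3 w3 h3 where R3: "{x3..<x3+w3} \<times> {0..<h3} \<in> T" "x3 \<le> 3" "3 < x3 + w3" "x3 + w3 \<le> 6"
      "w3 = 2 \<and> h3 = 3 \<or> w3 = 3 \<and> h3 = 2"
    using bottom_tile[OF T \<open>0 < N\<close>, of 3] by auto
  obtain x5 w5 h5 where R5: "{x5..<x5+w5} \<times> {0..<h5} \<in> T" "x5 \<le> 5" "5 < x5 + w5" "x5 + w5 \<le> 6"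
      "w5 = 2 \<and> h5 = 3 \<or> w5 = 3 \<and> h5 = 2"
    using bottom_tile[OF T \<open>0 < N\<close>, of 5] by auto
  have "x3 = 3"
    using bottom_tiles_eq_or_apart[OF disj R0 R3(1)] R3 by auto
  moreover have "w3 = 3" "h3 = 2"
    using bottom_tiles_eq_or_apart[OF disj R3(1) R5(1)] R3 R5 \<open>x3 = 3\<close> by auto
  ultimately show ?thesis
    using corner R3(1) by (simp add: horizontal_layer_def)
qed

lemma vertical_layer_subset:
  assumes T: "T \<in> tilings 2 3 6 N" and "0 < N" and corner: "{0..<2} \<times> {0..<3} \<in> T"
  shows "vertical_layer \<subseteq> T"
proof -
  have disj: "pairwise disjnt T"
    using T by (simp add: tilings_def)
  have R0: "{0..<0+2} \<times> {0..<3} \<in> T"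
    using corner by (simp only: add_0)
  obtain x2 w2 h2 where R2: "{x2..<x2+w2} \<times> {0..<h2} \<in> T" "x2 \<le> 2" "2 < x2 + w2" "x2 + w2 \<le> 6"
      "w2 = 2 \<and> h2 = 3 \<or> w2 = 3 \<and> h2 = 2"
    using bottom_tile[OF T \<open>0 < N\<close>, of 2] by auto
  obtain x4 w4 h4 where R4: "{x4..<x4+w4} \<times> {0..<h4} \<in> T" "x4 \<le> 4" "4 < x4 + w4" "x4 + w4 \<le> 6"
      "w4 = 2 \<and> h4 = 3 \<or> w4 = 3 \<and> h4 = 2"
    using bottom_tile[OF T \<open>0 < N\<close>, of 4] by auto
  obtain x5 w5 h5 where R5: "{x5..<x5+w5} \<times> {0..<h5} \<in> T" "x5 \<le> 5" "5 < x5 + w5" "x5 + w5 \<le> 6"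
      "w5 = 2 \<and> h5 = 3 \<or> w5 = 3 \<and> h5 = 2"
    using bottom_tile[OF T \<open>0 < N\<close>, of 5] by auto
  have "x2 = 2"
    using bottom_tiles_eq_or_apart[OF disj R0 R2(1)] R2 by auto
  moreover have "w2 = 2" "h2 = 3"
    using bottom_tiles_eq_or_apart[OF disj R2(1) R5(1)] R2 R5 \<open>x2 = 2\<close> by auto
  moreover have "x4 = 4" "w4 = 2" "h4 = 3"
    using bottom_tiles_eq_or_apart[OF disj R2(1) R4(1)] R2 R4 \<open>x2 = 2\<close> \<open>w2 = 2\<close> by auto
  ultimately show ?thesis
    using corner R2(1) R4(1) by (simp add: vertical_layer_def)
qed

lemma tiling_starts_with_layer:
  assumes T: "T \<in> tilings 2 3 6 N" and "0 < N"
  shows "horizontal_layer \<subseteq> T \<or> vertical_layer \<subseteq> T"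
proof -
  obtain x w h where R: "{x..<x+w} \<times> {0..<h} \<in> T" "x \<le> 0" "0 < x + w" "x + w \<le> 6"
      "w = 2 \<and> h = 3 \<or> w = 3 \<and> h = 2"
    using bottom_tile[OF T \<open>0 < N\<close>, of 0] by auto
  then have "{0..<3} \<times> {0..<2} \<in> T \<or> {0..<2} \<times> {0..<3} \<in> T"
    by auto
  then show ?thesis
    using horizontal_layer_subset[OF T \<open>0 < N\<close>] vertical_layer_subset[OF T \<open>0 < N\<close>] by blast
qed

lemma horizontal_vertical_layer_exclusive:
  "pairwise disjnt T \<Longrightarrow> \<not> (horizontal_layer \<subseteq> T \<and> vertical_layer \<subseteq> T)"
  using bottom_tiles_eq_or_apart[of T 0 3 2 0 2 3]
  by (auto simp: horizontal_layer_def vertical_layer_def)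

lemma num_tilings_6_recurrence:
  assumes "0 < N"
  shows "num_tilings 2 3 6 N =
    (if 2 \<le> N then num_tilings 2 3 6 (N - 2) else 0) + (if 3 \<le> N then num_tilings 2 3 6 (N - 3) else 0)"
proof -
  let ?H = "{T \<in> tilings 2 3 6 N. horizontal_layer \<subseteq> T}"
  let ?V = "{T \<in> tilings 2 3 6 N. vertical_layer \<subseteq> T}"
  have "finite (tilings 2 3 6 N)"
    by (simp add: tilings_eq_tilings_of finite_tilings_of rect_def)
  moreover have "?H \<inter> ?V = {}"
    using horizontal_vertical_layer_exclusive by (auto simp: tilings_def)
  moreover have "tilings 2 3 6 N = ?H \<union> ?V"
    using tiling_starts_with_layer[OF _ assms] by blast
  ultimately have "num_tilings 2 3 6 N = card ?H + card ?V"
    unfolding num_tilings_def by (metis (no_types, lifting) card_Un_disjoint finite_Un)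
  then show ?thesis
    by (simp add: card_tilings_containing_layer[OF horizontal_layer_tiling]
        card_tilings_containing_layer[OF vertical_layer_tiling])
qed

theorem mainTheorem9:
  shows "Abs_fps (\<lambda>N. of_nat (num_tilings 2 3 6 N)) =
           inverse (1 - fps_X ^ 2 - fps_X ^ 3 :: rat fps)"
proof -
  define f where "f = Abs_fps (\<lambda>N. of_nat (num_tilings 2 3 6 N) :: rat)"
  have "(1 - fps_X ^ 2 - fps_X ^ 3) * f = 1"
  proof (rule fps_ext)
    fix n
    have "((1 - fps_X ^ 2 - fps_X ^ 3) * f) $ n = f $ n - (fps_X ^ 2 * f) $ n - (fps_X ^ 3 * f) $ n"
      by (simp add: algebra_simps)
    also have "\<dots> = 1 $ n"
    proof (cases "n = 0")
      case True
      then show ?thesis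
        by (simp add: fps_X_power_mult_nth f_def num_tilings_zero)
    next
      case False
      then show ?thesis
        using num_tilings_6_recurrence[of n] by (simp add: fps_X_power_mult_nth f_def not_less)
    qed
    finally show "((1 - fps_X ^ 2 - fps_X ^ 3) * f) $ n = 1 $ n" .
  qed
  then have "inverse (1 - fps_X ^ 2 - fps_X ^ 3) = f"
    by (rule fps_inverse_unique)
  then show ?thesis
    unfolding f_def by simp
qed

end
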